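(* Let $\mathbf{P}$ be a probability distribution on $\mathbb{R}^D$ whose samples lie in a bounded box $\prod_{d=1}^D[\lambda,\mu]$, and let $U>0$. Fix $0<a<b$ and a latent dimension $K$, and let $\mathcal{C}^\dagger_{\mathbf{P},\frac12 U}$ be the set of Spectrum VAEs $(\phi,\theta)$ (with these $a,b,K$) that are essentially compatible with $\mathbf{P}$ given $\frac12 U$. Define $$\mathrm{MDL}^\dagger_U=\inf_{(\phi,\theta)\in\mathcal{C}^\dagger_{\mathbf{P},\frac12U}}\log_2\Big(\sum_{m=1}^M|\mathcal{P}_m|_{\frac12U}\Big),$$ where, for each $(\phi,\theta)$, $\mathcal{P}_1,\dots,\mathcal{P}_M$ are all the spiking patterns of spectra $\phi(\mathbf{x})$ with $\mathbf{x}$ drawn from $\mathbf{P}$, and $|\mathcal{P}_m|_{\frac12U}$ is the $\frac12U$-complexity of $\mathcal{P}_m$ with respect to $\theta$. Then $\mathrm{MDL}^\dagger_U\ge\log_2(\mathcal{E}_{\mathbf{P},U})$, where $\mathcal{E}_{\mathbf{P},U}$ is the $U$-essence of $\mathbf{P}$.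
   Context: Spectrum VAE: given $0<a<b$, an encoder $\phi:\mathbb{R}^D\to\mathbb{R}^K$ first computes $\mathbf{z}_{\mathrm{pre}}\in\mathbb{R}^K$ and then sets, coordinatewise, $z_k=z_{\mathrm{pre},k}$ if $a\le z_{\mathrm{pre},k}\le b$, $z_k=b$ if $z_{\mathrm{pre},k}>b$, and $z_k=0$ if $z_{\mathrm{pre},k}<a$; the output $\mathbf{z}=\phi(\mathbf{x})$ is called a spectrum, so each $z_k\in\{0\}\cup[a,b]$. A decoder $\theta:\mathbb{R}^K\to\mathbb{R}^D$ produces $\tilde{\mathbf{x}}=\theta(\mathbf{z})$; distances are Euclidean $\|\cdot\|_2$. The spiking pattern of a spectrum $\mathbf{z}$ is the set $\{k: z_k\ge a\}$ (which is $\emptyset$ if $\mathbf{z}=0$). Patterns and robustness: a pattern is a set $\mathcal{P}=\{k_1,\dots,k_L\}\subseteq\{1,\dots,K\}$. A spectrum preserved by $\mathcal{P}$ is any $\mathbf{z}\in\mathbb{R}^K$ with $z_{k_l}\in[a,b]$ for $l=1,\dots,L$ and all other coordinates zero (for $\mathcal{P}=\emptyset$ this is only the zero vector). Given $\alpha_{k_1},\dots,\alpha_{k_L}>0$ and perturbations $\epsilon_{k_l}\in[-\alpha_{k_l},\alpha_{k_l}]$ (i.e. in the support of $\mathcal{U}(-\alpha_{k_l},\alpha_{k_l})$), the perturbed spectrum $\tilde{\mathbf{z}}$ has $\tilde z_{k_l}=\min(b,\max(a,z_{k_l}+\epsilon_{k_l}))$ and zero elsewhere. The decoder $\theta$ is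 $U$-robust w.r.t. $\mathcal{P}$ with the ($U$-qualified) boundaries $\{\alpha_{k_l}\}$ if $\|\theta(\mathbf{z})-\theta(\tilde{\mathbf{z}})\|_2\le U$ for every spectrum $\mathbf{z}$ preserved by $\mathcal{P}$ and every such perturbation. For such boundaries let $Q_{k_l}$ be the smallest integer larger than $(b-a)/(2\alpha_{k_l})$; divide $[a,b]$ in coordinate $k_l$ into $Q_{k_l}$ equal pieces and use their midpoints as quantization scales; the $U$-representation set is the set of the $\prod_{l=1}^LQ_{k_l}$ spectra preserved by $\mathcal{P}$ whose $k_l$-coordinates are quantization scales (size $1$ for $\mathcal{P}=\emptyset$). The $U$-complexity $|\mathcal{P}|_U$ is the minimum size of a $U$-representation set over all $U$-qualified choices of boundaries, and $|\mathcal{P}|_U=\infty$ if $\theta$ is not $U$-robust w.r.t. $\mathcal{P}$ for any boundaries. Essential compatibility: $(\phi,\theta)$ is essentially compatible with $\mathbf{P}$ given $U'$ if every sample $\mathbf{x}$ drawn from $\mathbf{P}$ satisfies $\|\mathbf{x}-\theta(\phi(\mathbf{x}))\|_2\le U'$. $U$-essence: $\mathcal{E}_{\mathbf{P},U}$ is the minimum cardinality of a finite set $S\subset\mathbb{R}^D$ such that every sample $\mathbf{x}$ drawn from $\mathbf{P}$ has some $\hat{\mathbf{x}}\in S$ with $\|\mathbf{x}-\hat{\mathbf{x}}\|_2\le U$. *)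

theory Defs
  imports "HOL-Probability.Probability" "HOL-Library.Extended_Nat"
begin

text \<open>Samples drawn from a distribution P: the points of its (topological) support.\<close>
definition samples :: "('a::metric_space) measure \<Rightarrow> 'a set" where
  "samples P = {x. \<forall>e>0. emeasure P (ball x e) > 0}"

definition spec_clip :: "real \<Rightarrow> real \<Rightarrow> real \<Rightarrow> real" where
  "spec_clip a b t = (if t > b then b else if t < a then 0 else t)"

definition spectrum_encoder ::
  "real \<Rightarrow> real \<Rightarrow> (real^'d::finite \<Rightarrow> real^'k::finite) \<Rightarrow> bool" where
  "spectrum_encoder a b phi \<longleftrightarrow>
     (\<exists>zpre :: real^'d::finite \<Rightarrow> real^'k::finite. \<forall>x. phi x = (\<chi> k. spec_clip a b (zpre x $ k)))"

definition spiking_pattern :: "real \<Rightarrow> real^'k::finite \<Rightarrow> 'k set" where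
  "spiking_pattern a z = {k. z $ k \<ge> a}"

definition preserved :: "real \<Rightarrow> real \<Rightarrow> 'k set \<Rightarrow> real^'k::finite \<Rightarrow> bool" where
  "preserved a b Pt z \<longleftrightarrow>
     (\<forall>k\<in>Pt. a \<le> z $ k \<and> z $ k \<le> b) \<and> (\<forall>k. k \<notin> Pt \<longrightarrow> z $ k = 0)"

definition perturb :: "real \<Rightarrow> real \<Rightarrow> 'k set \<Rightarrow> real^'k::finite \<Rightarrow> ('k \<Rightarrow> real) \<Rightarrow> real^'k::finite" where
  "perturb a b Pt z eps = (\<chi> k. if k \<in> Pt then min b (max a (z $ k + eps k)) else 0)"

definition robust ::
  "real \<Rightarrow> real \<Rightarrow> (real^'k::finite \<Rightarrow> real^'d::finite) \<Rightarrow> real \<Rightarrow> 'k set \<Rightarrow> ('k \<Rightarrow> real) \<Rightarrow> bool" where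
  "robust a b theta U Pt alpha \<longleftrightarrow>
     (\<forall>k\<in>Pt. alpha k > 0) \<and>
     (\<forall>z eps. preserved a b Pt z \<longrightarrow> (\<forall>k\<in>Pt. -alpha k \<le> eps k \<and> eps k \<le> alpha k) \<longrightarrow>
        norm (theta z - theta (perturb a b Pt z eps)) \<le> U)"

definition quant_num :: "real \<Rightarrow> real \<Rightarrow> real \<Rightarrow> nat" where
  "quant_num a b al = nat (\<lfloor>(b - a) / (2 * al)\<rfloor> + 1)"

definition rep_set_size :: "real \<Rightarrow> real \<Rightarrow> 'k set \<Rightarrow> ('k \<Rightarrow> real) \<Rightarrow> nat" where
  "rep_set_size a b Pt alpha = (\<Prod>k\<in>Pt. quant_num a b (alpha k))"

text \<open>U-complexity; infinity if theta is not U-robust for any boundaries.\<close>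
definition complexity ::
  "real \<Rightarrow> real \<Rightarrow> (real^'k::finite \<Rightarrow> real^'d::finite) \<Rightarrow> real \<Rightarrow> 'k set \<Rightarrow> enat" where
  "complexity a b theta U Pt =
     Inf {enat (rep_set_size a b Pt alpha) | alpha. robust a b theta U Pt alpha}"

definition ess_compatible ::
  "(real^'d::finite) measure \<Rightarrow> real \<Rightarrow> (real^'d::finite \<Rightarrow> real^'k::finite) \<Rightarrow> (real^'k::finite \<Rightarrow> real^'d::finite) \<Rightarrow> bool" where
  "ess_compatible P U' phi theta \<longleftrightarrow> (\<forall>x\<in>samples P. norm (x - theta (phi x)) \<le> U')"

definition essence :: "(real^'d::finite) measure \<Rightarrow> real \<Rightarrow> nat" where
  "essence P U = (LEAST n. \<exists>S. finite S \<and> card S = n \<and>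
        (\<forall>x\<in>samples P. \<exists>y\<in>S. norm (x - y) \<le> U))"

definition mdl_cost ::
  "(real^'d::finite) measure \<Rightarrow> real \<Rightarrow> real \<Rightarrow> real \<Rightarrow> (real^'d::finite \<Rightarrow> real^'k::finite) \<Rightarrow> (real^'k::finite \<Rightarrow> real^'d::finite) \<Rightarrow> ereal" where
  "mdl_cost P a b U' phi theta =
     (let s = (\<Sum>Pt\<in>{spiking_pattern a (phi x) | x. x \<in> samples P}. complexity a b theta U' Pt)
      in if s = \<infinity> then \<infinity> else ereal (log 2 (real (the_enat s))))"

definition MDL_dagger ::
  "(real^'d::finite) measure \<Rightarrow> real \<Rightarrow> real \<Rightarrow> real \<Rightarrow> 'k::finite itself \<Rightarrow> ereal" where
  "MDL_dagger P a b U (_ :: 'k itself) =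
     Inf {mdl_cost P a b (U/2) phi theta | (phi :: real^'d::finite \<Rightarrow> real^'k::finite) theta.
            spectrum_encoder a b phi \<and> ess_compatible P (U/2) phi theta}"

end

(*
  For each spiking pattern of finite complexity pick boundaries attaining it. Every spectrum
  preserved by the pattern is within its boundaries of a quantization grid point, so by
  robustness its decoding is within U/2 of the decoding of that grid point. Since every sample
  is within U/2 of the decoding of its own spectrum, the decoded representation sets of all
  sample patterns form a U-cover of the samples of size at most the total complexity; hence
  the U-essence is at most the total complexity, and taking log 2 gives the bound.
*)
theory Submission
  imports Defs
begin

definition quant_scale :: "real \<Rightarrow> real \<Rightarrow> real \<Rightarrow> nat \<Rightarrow> real" where
  "quant_scale a b al j = a + (real j + 1/2) * (b - a) / real (quant_num a b al)"

definition rep_set :: "real \<Rightarrow> real \<Rightarrow> 'k set \<Rightarrow> ('k \<Rightarrow> real) \<Rightarrow> (real^'k::finite) set" where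
  "rep_set a b Pt alpha =
     (\<lambda>j. \<chi> k. if k \<in> Pt then quant_scale a b (alpha k) (j k) else 0) `
       PiE Pt (\<lambda>k. {..<quant_num a b (alpha k)})"

lemma quant_num_gt: "(b - a) / (2 * al) < real (quant_num a b al)"
  unfolding quant_num_def by linarith

lemma exists_half_integer_near:
  fixes t :: real and Q :: nat
  assumes "0 \<le> t" "t \<le> real Q" "Q > 0"
  shows "\<exists>j<Q. \<bar>t - (real j + 1/2)\<bar> \<le> 1/2"
proof (cases "t = real Q")
  case True
  then show ?thesis using assms by (intro exI[of _ "Q - 1"]) auto
next
  case False
  define j where "j = nat \<lfloor>t\<rfloor>"
  have "real j \<le> t" "t < real j + 1" using assms unfolding j_def by linarith+
  moreover have "j < Q" using False assms \<open>real j \<le> t\<close> by linarith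
  ultimately show ?thesis unfolding abs_le_iff by (intro exI[of _ j]) auto
qed

lemma quant_scale_bounds:
  assumes "a \<le> b" "j < quant_num a b al"
  shows "a \<le> quant_scale a b al j" "quant_scale a b al j \<le> b"
proof -
  have "(real j + 1/2) * (b - a) \<le> real (quant_num a b al) * (b - a)"
    using assms by (intro mult_right_mono) auto
  then have "(real j + 1/2) * (b - a) / real (quant_num a b al) \<le> b - a"
    using assms(2) by (simp add: divide_le_eq mult.commute)
  then show "quant_scale a b al j \<le> b" unfolding quant_scale_def by simp
  show "a \<le> quant_scale a b al j" unfolding quant_scale_def using assms(1) by simp
qed

lemma exists_quant_scale_near:
  assumes "0 < al" "a < b" "a \<le> z" "z \<le> b"
  shows "\<exists>j<quant_num a b al. \<bar>z - quant_scale a b al j\<bar> \<le> al"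
proof -
  define Q where "Q = quant_num a b al"
  have Q_gt: "(b - a) / (2 * al) < real Q" unfolding Q_def by (rule quant_num_gt)
  then have width: "b - a < 2 * al * real Q" using assms(1) by (simp add: field_simps)
  have "0 < (b - a) / (2 * al)" using assms(1,2) by simp
  with Q_gt have "Q > 0" by simp
  define h where "h = (b - a) / real Q"
  have "h > 0" using assms(2) \<open>Q > 0\<close> unfolding h_def by simp
  have "h / 2 < al" using width \<open>Q > 0\<close> unfolding h_def by (simp add: field_simps)
  define t where "t = (z - a) / h"
  have "0 \<le> t" "t \<le> real Q"
    using assms \<open>h > 0\<close> \<open>Q > 0\<close> unfolding t_def h_def by (simp_all add: field_simps)
  then obtain j where "j < Q" and j: "\<bar>t - (real j + 1/2)\<bar> \<le> 1/2"
    using exists_half_integer_near \<open>Q > 0\<close> by blast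
  have "z = a + t * h" using \<open>h > 0\<close> unfolding t_def by simp
  moreover have "quant_scale a b al j = a + (real j + 1/2) * h"
    unfolding quant_scale_def h_def Q_def by simp
  ultimately have "z - quant_scale a b al j = (t - (real j + 1/2)) * h"
    by (simp add: algebra_simps)
  then have "\<bar>z - quant_scale a b al j\<bar> \<le> h / 2"
    using j \<open>h > 0\<close> by (simp add: abs_mult mult_right_mono)
  then show ?thesis using \<open>j < Q\<close> \<open>h / 2 < al\<close> unfolding Q_def by force
qed

lemma finite_rep_set: "finite (rep_set a b Pt alpha)"
  unfolding rep_set_def by (intro finite_imageI finite_PiE) auto

lemma card_rep_set_le: "card (rep_set a b (Pt :: 'k::finite set) alpha) \<le> rep_set_size a b Pt alpha"
proof -
  have "card (rep_set a b Pt alpha) \<le> card (PiE Pt (\<lambda>k. {..<quant_num a b (alpha k)}))"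
    unfolding rep_set_def by (intro card_image_le finite_PiE) auto
  also have "\<dots> = rep_set_size a b Pt alpha"
    by (simp add: card_PiE rep_set_size_def)
  finally show ?thesis .
qed

lemma rep_set_preserved:
  assumes "a \<le> b" "q \<in> rep_set a b Pt alpha"
  shows "preserved a b Pt q"
  using assms unfolding rep_set_def preserved_def by (auto intro!: quant_scale_bounds dest: PiE_mem)

text \<open>Move from the nearest representative q back to z by the perturbation z - q: it stays
  within the boundaries, and the clipping in perturb is inactive because z is preserved.\<close>
lemma robust_imp_near_rep_set:
  fixes theta :: "real^'k::finite \<Rightarrow> real^'d::finite"
  assumes rob: "robust a b theta U Pt alpha" and z: "preserved a b Pt z" and "a < b"
  shows "\<exists>q\<in>rep_set a b Pt alpha. norm (theta z - theta q) \<le> U"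
proof -
  have "\<exists>j<quant_num a b (alpha k). \<bar>z $ k - quant_scale a b (alpha k) j\<bar> \<le> alpha k"
    if "k \<in> Pt" for k
    using rob z that \<open>a < b\<close> exists_quant_scale_near[of "alpha k" a b "z $ k"]
    unfolding robust_def preserved_def by blast
  then obtain j where j: "\<And>k. k \<in> Pt \<Longrightarrow>
      j k < quant_num a b (alpha k) \<and> \<bar>z $ k - quant_scale a b (alpha k) (j k)\<bar> \<le> alpha k"
    by metis
  define q :: "real^'k" where "q = (\<chi> k. if k \<in> Pt then quant_scale a b (alpha k) (j k) else 0)"
  have "restrict j Pt \<in> PiE Pt (\<lambda>k. {..<quant_num a b (alpha k)})" using j by auto
  moreover have "q = (\<chi> k. if k \<in> Pt then quant_scale a b (alpha k) (restrict j Pt k) else 0)"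
    unfolding q_def by (simp add: vec_eq_iff)
  ultimately have "q \<in> rep_set a b Pt alpha" unfolding rep_set_def by blast
  define eps where "eps k = z $ k - q $ k" for k
  have "\<bar>eps k\<bar> \<le> alpha k" if "k \<in> Pt" for k
    using j[OF that] that unfolding eps_def q_def by simp
  then have "\<forall>k\<in>Pt. - alpha k \<le> eps k \<and> eps k \<le> alpha k" by (meson abs_le_iff minus_le_iff)
  moreover have "perturb a b Pt q eps = z"
    using z unfolding perturb_def eps_def preserved_def by (simp add: vec_eq_iff)
  ultimately have "norm (theta q - theta z) \<le> U"
    using rob rep_set_preserved[OF _ \<open>q \<in> rep_set a b Pt alpha\<close>] \<open>a < b\<close>
    unfolding robust_def by (metis less_imp_le)
  then show ?thesis using \<open>q \<in> rep_set a b Pt alpha\<close> by (metis norm_minus_commute)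
qed

lemma complexity_eq_enatE:
  assumes "complexity a b theta U Pt = enat n"
  obtains alpha where "robust a b theta U Pt alpha" "rep_set_size a b Pt alpha = n"
proof -
  let ?A = "{enat (rep_set_size a b Pt alpha) | alpha. robust a b theta U Pt alpha}"
  have "?A \<noteq> {}"
  proof
    assume "?A = {}"
    then have "complexity a b theta U Pt = \<infinity>" unfolding complexity_def by (simp add: Inf_enat_def)
    with assms show False by simp
  qed
  then have "Inf ?A \<in> ?A" unfolding Inf_enat_def by (auto intro: LeastI)
  then show ?thesis using assms that unfolding complexity_def by auto
qed

lemma complexity_decoded_net:
  assumes "complexity a b theta U Pt = enat n" "a < b"
  obtains S where "finite S" "card S \<le> n"
    "\<And>z. preserved a b Pt z \<Longrightarrow> \<exists>y\<in>S. norm (theta z - y) \<le> U"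
proof -
  obtain alpha where "robust a b theta U Pt alpha" "rep_set_size a b Pt alpha = n"
    using complexity_eq_enatE[OF assms(1)] .
  show ?thesis
  proof (rule that)
    show "finite (theta ` rep_set a b Pt alpha)" by (simp add: finite_rep_set)
    have "card (theta ` rep_set a b Pt alpha) \<le> card (rep_set a b Pt alpha)"
      by (simp add: card_image_le finite_rep_set)
    also have "\<dots> \<le> n" using card_rep_set_le \<open>rep_set_size a b Pt alpha = n\<close> by metis
    finally show "card (theta ` rep_set a b Pt alpha) \<le> n" .
    show "\<exists>y\<in>theta ` rep_set a b Pt alpha. norm (theta z - y) \<le> U" if "preserved a b Pt z" for z
      using robust_imp_near_rep_set[OF \<open>robust a b theta U Pt alpha\<close> that assms(2)] by blast
  qed
qed

lemma spectrum_encoder_preserved: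
  assumes "spectrum_encoder a b phi" "0 < a" "a \<le> b"
  shows "preserved a b (spiking_pattern a (phi x)) (phi x)"
  using assms unfolding spectrum_encoder_def preserved_def spiking_pattern_def spec_clip_def
  by (auto split: if_splits)

lemma essence_le_card:
  assumes "finite S" "\<forall>x\<in>samples P. \<exists>y\<in>S. norm (x - y) \<le> U"
  shows "essence P U \<le> card S"
  unfolding essence_def by (rule Least_le) (use assms in blast)

lemma sample_near_decoded_net:
  assumes "spectrum_encoder a b phi" "ess_compatible P U1 phi theta" "0 < a" "a \<le> b"
    and "x \<in> samples P"
    and "\<forall>z. preserved a b (spiking_pattern a (phi x)) z \<longrightarrow> (\<exists>y\<in>S. norm (theta z - y) \<le> U2)"
  shows "\<exists>y\<in>S. norm (x - y) \<le> U1 + U2"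
proof -
  obtain y where "y \<in> S" "norm (theta (phi x) - y) \<le> U2"
    using assms(6) spectrum_encoder_preserved[OF assms(1,3,4)] by blast
  moreover have "norm (x - theta (phi x)) \<le> U1"
    using assms(2,5) unfolding ess_compatible_def by blast
  ultimately show ?thesis
    using norm_triangle_ineq[of "x - theta (phi x)" "theta (phi x) - y"] by force
qed

lemma essence_le_total_complexity:
  fixes phi :: "real^'d::finite \<Rightarrow> real^'k::finite" and theta :: "real^'k \<Rightarrow> real^'d"
  assumes enc: "spectrum_encoder a b phi" and comp: "ess_compatible P U1 phi theta"
    and "0 < a" "a < b"
  shows "enat (essence P (U1 + U2))
    \<le> (\<Sum>Pt\<in>{spiking_pattern a (phi x) | x. x \<in> samples P}. complexity a b theta U2 Pt)"
proof -
  define PS where "PS = {spiking_pattern a (phi x) | x. x \<in> samples P}"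
  define c where "c Pt = complexity a b theta U2 Pt" for Pt
  have "finite PS" by (rule finite_subset[of _ UNIV]) auto
  show ?thesis
  proof (cases "\<exists>Pt\<in>PS. c Pt = \<infinity>")
    case True
    then obtain Pt where "Pt \<in> PS" "c Pt = \<infinity>" by blast
    then have "sum c PS = \<infinity>" using \<open>finite PS\<close> by (simp add: sum.remove)
    then show ?thesis unfolding PS_def c_def by simp
  next
    case False
    then have "\<forall>Pt\<in>PS. \<exists>m. c Pt = enat m" by simp
    then obtain n where n: "\<forall>Pt\<in>PS. c Pt = enat (n Pt)" by (rule bchoice[elim_format]) blast
    have "\<forall>Pt\<in>PS. \<exists>S. finite S \<and> card S \<le> n Pt \<and>
        (\<forall>z. preserved a b Pt z \<longrightarrow> (\<exists>y\<in>S. norm (theta z - y) \<le> U2))"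
      using n complexity_decoded_net[OF _ \<open>a < b\<close>] unfolding c_def by metis
    then obtain S where S: "\<forall>Pt\<in>PS. finite (S Pt) \<and> card (S Pt) \<le> n Pt \<and>
        (\<forall>z. preserved a b Pt z \<longrightarrow> (\<exists>y\<in>S Pt. norm (theta z - y) \<le> U2))"
      by (rule bchoice[elim_format]) blast
    have "\<exists>y\<in>\<Union>(S ` PS). norm (x - y) \<le> U1 + U2" if "x \<in> samples P" for x
    proof -
      have "spiking_pattern a (phi x) \<in> PS" unfolding PS_def using that by blast
      with S sample_near_decoded_net[OF enc comp \<open>0 < a\<close> _ that, of "S (spiking_pattern a (phi x))"]
      show ?thesis using \<open>a < b\<close> by fastforce
    qed
    then have "essence P (U1 + U2) \<le> card (\<Union>(S ` PS))"
      using S \<open>finite PS\<close> by (intro essence_le_card) auto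
    also have "\<dots> \<le> (\<Sum>Pt\<in>PS. card (S Pt))" by (rule card_UN_le[OF \<open>finite PS\<close>])
    also have "\<dots> \<le> (\<Sum>Pt\<in>PS. n Pt)" using S by (intro sum_mono) blast
    finally have "enat (essence P (U1 + U2)) \<le> of_nat (\<Sum>Pt\<in>PS. n Pt)"
      by (simp add: of_nat_eq_enat)
    also have "\<dots> = (\<Sum>Pt\<in>PS. of_nat (n Pt))" by (rule of_nat_sum)
    also have "\<dots> = sum c PS" using n by (simp add: of_nat_eq_enat)
    finally show ?thesis unfolding PS_def c_def .
  qed
qed

text \<open>The case m = 0 is included because log 2 0 = 0 (ln 0 = 0 in Isabelle).\<close>
lemma log2_of_nat_mono:
  assumes "m \<le> n"
  shows "log 2 (real m) \<le> log 2 (real n)"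
proof (cases "m = 0")
  case True
  then show ?thesis using assms by (cases "n = 0") (simp_all add: log_def)
next
  case False
  then show ?thesis using assms by (simp add: log_mono)
qed

lemma log_essence_le_mdl_cost:
  fixes phi :: "real^'d::finite \<Rightarrow> real^'k::finite" and theta :: "real^'k \<Rightarrow> real^'d"
  assumes "spectrum_encoder a b phi" "ess_compatible P U1 phi theta" "0 < a" "a < b"
  shows "ereal (log 2 (real (essence P (U1 + U2)))) \<le> mdl_cost P a b U2 phi theta"
proof -
  define s where "s = (\<Sum>Pt\<in>{spiking_pattern a (phi x) | x. x \<in> samples P}.
                        complexity a b theta U2 Pt)"
  have "enat (essence P (U1 + U2)) \<le> s"
    unfolding s_def by (rule essence_le_total_complexity[OF assms])
  then show ?thesis
    unfolding mdl_cost_def Let_def s_def[symmetric]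
    by (cases s) (simp_all add: log2_of_nat_mono)
qed

theorem theorem1:
  fixes P :: "(real^'d) measure" and lam mu U a b :: real
  assumes "prob_space P" and "sets P = sets borel"
    and "samples P \<subseteq> {x. \<forall>d. lam \<le> x $ d \<and> x $ d \<le> mu}"
    and "U > 0" and "0 < a" and "a < b"
  shows "MDL_dagger P a b U TYPE('k::finite) \<ge> ereal (log 2 (real (essence P U)))"
  unfolding MDL_dagger_def
proof (rule Inf_greatest, clarify)
  fix phi :: "real^'d \<Rightarrow> real^'k" and theta
  assume "spectrum_encoder a b phi" "ess_compatible P (U/2) phi theta"
  from log_essence_le_mdl_cost[OF this \<open>0 < a\<close> \<open>a < b\<close>, of "U/2"]
  show "ereal (log 2 (real (essence P U))) \<le> mdl_cost P a b (U/2) phi theta" by simp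
qed

end
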